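(* Let $G=A_n$ be the alternating group with $n\ge 5$. Then $\kappa(G)=2$.
   Context: The commutator is $[x,y]=xyx^{-1}y^{-1}$. For a finite group $G$ with solvable radical $R(G)$ and $g\in G\setminus R(G)$, $\kappa(g)$ is the smallest $n$ such that there exist $x_1,\dots,x_n\in G$ with $\langle [g,x_1],\dots,[g,x_n]\rangle$ not solvable, and $\kappa(G)=\max_{g\in G\setminus R(G)}\kappa(g)$ (the radical degree of $G$). *)

theory Defs
  imports "HOL-Algebra.Solvable_Groups" "HOL-Algebra.Sym_Groups"
begin

definition commutator :: "('a, 'b) monoid_scheme \<Rightarrow> 'a \<Rightarrow> 'a \<Rightarrow> 'a" where
  "commutator G x y = x \<otimes>\<^bsub>G\<^esub> y \<otimes>\<^bsub>G\<^esub> inv\<^bsub>G\<^esub> x \<otimes>\<^bsub>G\<^esub> inv\<^bsub>G\<^esub> y"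

text \<open>Solvable radical: the subgroup generated by all solvable normal subgroups
  (for a finite group this is the largest solvable normal subgroup).\<close>
definition solvable_radical :: "('a, 'b) monoid_scheme \<Rightarrow> 'a set" where
  "solvable_radical G =
     generate G (\<Union> {N. N \<lhd> G \<and> solvable (G\<lparr>carrier := N\<rparr>)})"

definition kappa_elem :: "('a, 'b) monoid_scheme \<Rightarrow> 'a \<Rightarrow> nat" where
  "kappa_elem G g = (LEAST n. \<exists>xs. length xs = n \<and> set xs \<subseteq> carrier G \<and>
      \<not> solvable (G\<lparr>carrier := generate G ((\<lambda>x. commutator G g x) ` set xs)\<rparr>))"

definition radical_degree :: "('a, 'b) monoid_scheme \<Rightarrow> nat" where
  "radical_degree G = Max (kappa_elem G ` (carrier G - solvable_radical G))"

end

theory Submission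
  imports Defs "HOL-Algebra.Elementary_Groups"
begin

text \<open>For every g \<noteq> 1 in A_n (n \<ge> 5) there are two 3-cycles x, y such that u = [g, x] and
  v = [g, y] are themselves commutators of explicit words in u and v. Hence K = \<langle>u, v\<rangle> is
  perfect and nontrivial, so no subgroup containing u and v is solvable. A normal subgroup
  containing g contains u and v, so the solvable radical is trivial; and kappa(g) = 2, since a
  single commutator generates a cyclic, hence solvable, subgroup. The 3-cycles and the words are
  chosen by a case distinction on the cycle type of g, and the required identities are checked by
  evaluating the permutations at the finitely many points involved.\<close>

section \<open>Perfect commutator pairs and the radical degree\<close>

lemma (in comm_group) is_solvable: "solvable G"
proof -
  have "(derived G ^^ 1) (carrier G) = {\<one>}"
    using derived_eq_singleton by simp
  then show ?thesis
    unfolding solvable_iff_trivial_derived_seq by blast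
qed

lemma (in group) solvable_generate_singleton:
  assumes "a \<in> carrier G"
  shows "solvable (G\<lparr>carrier := generate G {a}\<rparr>)"
proof -
  have "G\<lparr>carrier := generate G {a}\<rparr> = subgroup_generated G {a}"
    using assms by (simp add: subgroup_generated_def)
  moreover have "comm_group (subgroup_generated G {a})"
    by (simp add: group.cyclic_imp_abelian_group cyclic_group_generated)
  ultimately show ?thesis
    by (simp add: comm_group.is_solvable)
qed

lemma (in group) not_solvable_if_perfect:
  assumes H: "subgroup H G" and "K \<subseteq> H" and perfect: "K \<subseteq> derived G K"
    and "k \<in> K" "k \<noteq> \<one>"
  shows "\<not> solvable (G\<lparr>carrier := H\<rparr>)"
proof
  let ?H = "G\<lparr>carrier := H\<rparr>"
  assume "solvable ?H"
  interpret H: group ?H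
    using subgroup_imp_group[OF H] .
  obtain m where m: "(derived ?H ^^ m) H = {\<one>}"
    using \<open>solvable ?H\<close> H.solvable_iff_trivial_derived_seq by auto
  have "K \<subseteq> (derived ?H ^^ i) K" for i
  proof (induction i)
    case (Suc i)
    have "K \<subseteq> derived ?H K"
      using perfect derived_consistent[OF \<open>K \<subseteq> H\<close> H] by simp
    also have "\<dots> \<subseteq> derived ?H ((derived ?H ^^ i) K)"
      using Suc H.mono_derived by blast
    finally show ?case by simp
  qed simp
  also have "(derived ?H ^^ m) K \<subseteq> (derived ?H ^^ m) H"
    using H.mono_exp_of_derived \<open>K \<subseteq> H\<close> by simp
  finally show False
    using m \<open>k \<in> K\<close> \<open>k \<noteq> \<one>\<close> by auto
qed

lemma (in group) generate_subset_derived: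
  assumes "S \<subseteq> carrier G" and "S \<subseteq> derived_set G (generate G S)"
  shows "generate G S \<subseteq> derived G (generate G S)"
proof (rule generate_subgroup_incl)
  show "S \<subseteq> derived G (generate G S)"
    using assms(2) unfolding derived_def by (blast intro: generate.incl)
  show "subgroup (derived G (generate G S)) G"
    using derived_is_subgroup generate_incl[OF assms(1)] .
qed

lemma (in normal) commutator_left_closed:
  assumes "g \<in> H" and "x \<in> carrier G"
  shows "commutator G g x \<in> H"
proof -
  have "x \<otimes> inv g \<otimes> inv x \<in> H"
    using inv_op_closed2[OF assms(2) m_inv_closed[OF assms(1)]] .
  then have "g \<otimes> (x \<otimes> inv g \<otimes> inv x) \<in> H"
    using assms(1) by simp
  then show ?thesis
    using assms subset by (simp add: commutator_def m_assoc)
qed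

lemma (in group) commutator_eqI:
  assumes "u \<in> carrier G" "h \<in> carrier G" "k \<in> carrier G"
    and "u \<otimes> k \<otimes> h = h \<otimes> k"
  shows "u = commutator G h k"
proof -
  have "commutator G h k = u \<otimes> k \<otimes> h \<otimes> inv h \<otimes> inv k"
    using assms(4) by (simp add: commutator_def)
  also have "\<dots> = u"
    using assms(1-3) by (simp add: m_assoc)
  finally show ?thesis by simp
qed

definition perfect_commutator_pair :: "('a, 'b) monoid_scheme \<Rightarrow> 'a \<Rightarrow> 'a \<Rightarrow> 'a \<Rightarrow> bool" where
  "perfect_commutator_pair G g x y \<longleftrightarrow> x \<in> carrier G \<and> y \<in> carrier G \<and> commutator G g x \<noteq> \<one>\<^bsub>G\<^esub> \<and>
     generate G {commutator G g x, commutator G g y}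
       \<subseteq> derived G (generate G {commutator G g x, commutator G g y})"

lemma (in group) perfect_commutator_pairI:
  fixes g x y :: 'a
  defines "K \<equiv> generate G {commutator G g x, commutator G g y}"
  assumes "g \<in> carrier G" "x \<in> carrier G" "y \<in> carrier G" "commutator G g x \<noteq> \<one>"
    and "h \<in> K" "k \<in> K" "h' \<in> K" "k' \<in> K"
    and "commutator G g x = commutator G h k" "commutator G g y = commutator G h' k'"
  shows "perfect_commutator_pair G g x y"
proof -
  have "{commutator G g x, commutator G g y} \<subseteq> carrier G"
    using assms(2-4) by (simp add: commutator_def)
  moreover have "{commutator G g x, commutator G g y} \<subseteq> derived_set G K"
    using assms(6-11) unfolding commutator_def by blast
  ultimately have "K \<subseteq> derived G K"
    unfolding K_def by (rule generate_subset_derived)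
  then show ?thesis
    using assms(3-5) by (simp add: perfect_commutator_pair_def K_def)
qed

lemma (in group) not_solvable_if_perfect_commutator_pair:
  assumes "perfect_commutator_pair G g x y" and "g \<in> carrier G" and "subgroup H G"
    and "commutator G g x \<in> H" "commutator G g y \<in> H"
  shows "\<not> solvable (G\<lparr>carrier := H\<rparr>)"
proof -
  let ?K = "generate G {commutator G g x, commutator G g y}"
  show ?thesis
  proof (rule not_solvable_if_perfect)
    show "?K \<subseteq> H"
      using assms(3-5) by (intro generate_subgroup_incl) auto
    show "?K \<subseteq> derived G ?K" "commutator G g x \<in> ?K" "commutator G g x \<noteq> \<one>"
      using assms(1) by (auto simp: perfect_commutator_pair_def intro: generate.incl)
  qed (use assms in simp)
qed

lemma (in group) solvable_radical_trivial:
  assumes "\<And>g. g \<in> carrier G \<Longrightarrow> g \<noteq> \<one> \<Longrightarrow> \<exists>x y. perfect_commutator_pair G g x y"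
  shows "solvable_radical G = {\<one>}"
proof -
  have "N \<subseteq> {\<one>}" if "N \<lhd> G" and "solvable (G\<lparr>carrier := N\<rparr>)" for N
  proof
    fix g assume "g \<in> N"
    interpret N: normal N G by fact
    show "g \<in> {\<one>}"
    proof (rule ccontr)
      assume "g \<notin> {\<one>}"
      then obtain x y where "perfect_commutator_pair G g x y"
        using assms N.subset \<open>g \<in> N\<close> by blast
      then have "\<not> solvable (G\<lparr>carrier := N\<rparr>)"
        using \<open>g \<in> N\<close> N.subset N.subgroup_axioms
        by (intro not_solvable_if_perfect_commutator_pair)
          (auto intro: N.commutator_left_closed simp: perfect_commutator_pair_def)
      then show False using that(2) by contradiction
    qed
  qed
  then have "generate G (\<Union> {N. N \<lhd> G \<and> solvable (G\<lparr>carrier := N\<rparr>)}) \<subseteq> generate G {\<one>}"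
    by (intro mono_generate) blast
  then show ?thesis
    unfolding solvable_radical_def generate_one using generate.one by blast
qed

lemma (in group) kappa_elem_eq_two:
  assumes "g \<in> carrier G" and "perfect_commutator_pair G g x y"
  shows "kappa_elem G g = 2"
  unfolding kappa_elem_def
proof (rule Least_equality)
  have "x \<in> carrier G" "y \<in> carrier G" "commutator G g x \<in> carrier G" "commutator G g y \<in> carrier G"
    using assms by (auto simp: perfect_commutator_pair_def commutator_def)
  then have "\<not> solvable (G\<lparr>carrier := generate G {commutator G g x, commutator G g y}\<rparr>)"
    using assms by (intro not_solvable_if_perfect_commutator_pair[of g x y] generate_is_subgroup)
      (auto intro: generate.incl)
  then show "\<exists>xs. length xs = 2 \<and> set xs \<subseteq> carrier G \<and>
      \<not> solvable (G\<lparr>carrier := generate G (commutator G g ` set xs)\<rparr>)"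
    using \<open>x \<in> carrier G\<close> \<open>y \<in> carrier G\<close> by (intro exI[of _ "[x, y]"]) auto
next
  fix m
  assume "\<exists>xs. length xs = m \<and> set xs \<subseteq> carrier G \<and>
      \<not> solvable (G\<lparr>carrier := generate G (commutator G g ` set xs)\<rparr>)"
  then obtain xs where xs: "length xs = m" "set xs \<subseteq> carrier G"
    and not_solvable: "\<not> solvable (G\<lparr>carrier := generate G (commutator G g ` set xs)\<rparr>)"
    by blast
  show "2 \<le> m"
  proof (rule ccontr)
    assume "\<not> 2 \<le> m"
    obtain c where "c \<in> carrier G" "generate G (commutator G g ` set xs) = generate G {c}"
    proof (cases xs)
      case Nil
      then show thesis
        using that[of \<one>] by (simp add: generate_empty generate_one)
    next
      case (Cons x ys)
      then have "xs = [x]"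
        using xs(1) \<open>\<not> 2 \<le> m\<close> by (cases ys) auto
      then show thesis
        using that[of "commutator G g x"] xs(2) assms(1) by (simp add: commutator_def)
    qed
    then show False
      using not_solvable solvable_generate_singleton by simp
  qed
qed

theorem (in group) radical_degree_eq_two:
  assumes "carrier G \<noteq> {\<one>}"
    and "\<And>g. g \<in> carrier G \<Longrightarrow> g \<noteq> \<one> \<Longrightarrow> \<exists>x y. perfect_commutator_pair G g x y"
  shows "radical_degree G = 2"
proof -
  have "kappa_elem G ` (carrier G - {\<one>}) = (\<lambda>_. 2) ` (carrier G - {\<one>})"
    using assms(2) kappa_elem_eq_two by (intro image_cong) blast+
  also have "\<dots> = {2}"
    using assms(1) by auto
  finally show ?thesis
    by (simp add: radical_degree_def solvable_radical_trivial[OF assms(2)])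
qed

section \<open>Commutators with 3-cycles in the alternating group\<close>

lemma cycle_of_list_three_apply:
  assumes "distinct [p, q, r]"
  shows "cycle_of_list [p, q, r] i = (if i = p then q else if i = q then r else if i = r then p else i)"
  using assms by (auto simp: transpose_def)

declare cycle_of_list.simps [simp del]

lemma inv_cycle_of_list_three:
  assumes "distinct [p, q, r]"
  shows "inv' (cycle_of_list [p, q, r]) = cycle_of_list [p, r, q]"
  by (rule inv_unique_comp) (use assms in \<open>auto simp: fun_eq_iff cycle_of_list_three_apply split: if_splits\<close>)

lemma cycle_of_list_three_in_alt_group:
  assumes "distinct [p, q, r]" and "{p, q, r} \<subseteq> {1..n}"
  shows "cycle_of_list [p, q, r] \<in> carrier (alt_group n)"
  using three_cycles_incl[of n] assms by fastforce

lemma alt_group_commutator: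
  assumes "g \<in> carrier (alt_group n)" and "x \<in> carrier (alt_group n)"
  shows "commutator (alt_group n) g x = g \<circ> x \<circ> inv' g \<circ> inv' x"
  using assms by (simp add: commutator_def alt_group_mult alt_group_inv_equality)

lemma alt_group_commutator_three_cycle:
  assumes "g \<in> carrier (alt_group n)" and "distinct [p, q, r]" and "{p, q, r} \<subseteq> {1..n}"
  shows "commutator (alt_group n) g (cycle_of_list [p, q, r])
           = cycle_of_list [g p, g q, g r] \<circ> cycle_of_list [p, r, q]"
proof -
  have "bij g"
    using assms(1) permutes_bij by (auto simp: alt_group_carrier)
  have "commutator (alt_group n) g (cycle_of_list [p, q, r])
          = (g \<circ> cycle_of_list [p, q, r] \<circ> inv' g) \<circ> inv' (cycle_of_list [p, q, r])"
    using alt_group_commutator[OF assms(1) cycle_of_list_three_in_alt_group[OF assms(2,3)]]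
    by (simp only: comp_assoc)
  also have "\<dots> = cycle_of_list [g p, g q, g r] \<circ> cycle_of_list [p, r, q]"
    unfolding conjugation_of_cycle[OF assms(2) \<open>bij g\<close>] inv_cycle_of_list_three[OF assms(2)]
    by simp
  finally show ?thesis .
qed

lemma generate_alt_group_comp:
  assumes "h \<in> generate (alt_group n) S" and "k \<in> generate (alt_group n) S"
  shows "h \<circ> k \<in> generate (alt_group n) S"
  using generate.eng[OF assms] by (simp add: alt_group_mult)

text \<open>The last two hypotheses say u = [h, k] and v = [h', k'] with the inverses multiplied out,
  so that they can be checked by evaluating permutations.\<close>

lemma perfect_commutator_pair_three_cyclesI:
  assumes u: "u = cycle_of_list [g p, g q, g r] \<circ> cycle_of_list [p, r, q]"
    and v: "v = cycle_of_list [g p', g q', g r'] \<circ> cycle_of_list [p', r', q']"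
    and g: "g \<in> carrier (alt_group n)"
    and "distinct [p, q, r]" "distinct [p', q', r']" "{p, q, r, p', q', r'} \<subseteq> {1..n}"
    and "u \<noteq> id"
    and "h \<in> generate (alt_group n) {u, v}" "k \<in> generate (alt_group n) {u, v}"
    and "h' \<in> generate (alt_group n) {u, v}" "k' \<in> generate (alt_group n) {u, v}"
    and "u \<circ> k \<circ> h = h \<circ> k" "v \<circ> k' \<circ> h' = h' \<circ> k'"
  shows "perfect_commutator_pair (alt_group n) g (cycle_of_list [p, q, r]) (cycle_of_list [p', q', r'])"
proof -
  interpret A: group "alt_group n"
    by (rule alt_group_is_group)
  have x: "cycle_of_list [p, q, r] \<in> carrier (alt_group n)"
    and y: "cycle_of_list [p', q', r'] \<in> carrier (alt_group n)"
    using assms(4-6) by (simp_all add: cycle_of_list_three_in_alt_group)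
  have commutators: "commutator (alt_group n) g (cycle_of_list [p, q, r]) = u"
    "commutator (alt_group n) g (cycle_of_list [p', q', r']) = v"
    using assms(4-6) by (simp_all add: alt_group_commutator_three_cycle g u v)
  have "{u, v} \<subseteq> carrier (alt_group n)"
    using commutators g x y by (auto simp: commutator_def)
  then have "h \<in> carrier (alt_group n)" "k \<in> carrier (alt_group n)"
    "h' \<in> carrier (alt_group n)" "k' \<in> carrier (alt_group n)"
    using assms(8-11) A.generate_in_carrier by blast+
  with \<open>{u, v} \<subseteq> carrier (alt_group n)\<close>
  have "u = commutator (alt_group n) h k" "v = commutator (alt_group n) h' k'"
    using assms(12,13) by (auto intro!: A.commutator_eqI simp: alt_group_mult)
  then show ?thesis
    using g x y assms(7-11) commutators
    by (intro A.perfect_commutator_pairI) (simp_all add: alt_group_one)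
qed

text \<open>Stated with map rather than a quantifier over the list, so that the simplifier evaluates
  both sides at the concrete points instead of at a bound variable, where the nested
  case distinctions of composed cycles blow up.\<close>

lemma fun_eq_on_list:
  assumes "map f xs = map g xs" and "\<And>i. i \<notin> set xs \<Longrightarrow> f i = g i"
  shows "f = g"
  using assms by (auto simp: fun_eq_iff map_eq_conv)

section \<open>Witnesses for each cycle type\<close>

text \<open>In the following computations, eq_commute (applied by ordered rewriting) lets the simplifier
  use the disequalities coming from distinct in either orientation.\<close>

lemma perfect_commutator_pair_long_cycle:
  assumes g: "g \<in> carrier (alt_group n)" and dist: "distinct [a, b, c, d, e]"
    and points: "{a, b, c, d, e} \<subseteq> {1..n}"
    and gv: "g a = b" "g b = c" "g c = d" "g d = e"
  shows "\<exists>x y. perfect_commutator_pair (alt_group n) g x y"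
proof -
  define u where "u = cycle_of_list [g a, g b, g d] \<circ> cycle_of_list [a, d, b]"
  define v where "v = cycle_of_list [g a, g c, g d] \<circ> cycle_of_list [a, d, c]"
  have "u a \<noteq> a"
    unfolding u_def gv using dist by (simp add: cycle_of_list_three_apply eq_commute)
  moreover have "u \<circ> v \<circ> (v \<circ> u) = v \<circ> u \<circ> v"
    unfolding u_def v_def gv using dist
    by (intro fun_eq_on_list[where xs = "[a, b, c, d, e]"])
      (simp_all add: cycle_of_list_three_apply eq_commute)
  moreover have "v \<circ> u \<circ> (u \<circ> v) = u \<circ> v \<circ> u"
    unfolding u_def v_def gv using dist
    by (intro fun_eq_on_list[where xs = "[a, b, c, d, e]"])
      (simp_all add: cycle_of_list_three_apply eq_commute)
  ultimately have "perfect_commutator_pair (alt_group n) g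
      (cycle_of_list [a, b, d]) (cycle_of_list [a, c, d])"
    using g dist points
    by (intro perfect_commutator_pair_three_cyclesI[OF u_def v_def,
          where h = "v \<circ> u" and k = v
            and h' = "u \<circ> v" and k' = u]
          generate_alt_group_comp generate.incl insertI1 insertI2) auto
  then show ?thesis
    by blast
qed

lemma perfect_commutator_pair_four_cycle:
  assumes g: "g \<in> carrier (alt_group n)" and dist: "distinct [a, b, c, d, e, f]"
    and points: "{a, b, c, d, e, f} \<subseteq> {1..n}"
    and gv: "g a = b" "g b = c" "g c = d" "g d = a" "g e = f"
  shows "\<exists>x y. perfect_commutator_pair (alt_group n) g x y"
proof -
  define u where "u = cycle_of_list [g a, g b, g e] \<circ> cycle_of_list [a, e, b]"
  define v where "v = cycle_of_list [g a, g e, g b] \<circ> cycle_of_list [a, b, e]"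
  have "u a \<noteq> a"
    unfolding u_def gv using dist by (simp add: cycle_of_list_three_apply eq_commute)
  moreover have "u \<circ> (v \<circ> v \<circ> v \<circ> u) \<circ> v = v \<circ> (v \<circ> v \<circ> v \<circ> u)"
    unfolding u_def v_def gv using dist
    by (intro fun_eq_on_list[where xs = "[a, b, c, d, e, f]"])
      (simp_all add: cycle_of_list_three_apply eq_commute)
  moreover have "v \<circ> (u \<circ> u \<circ> u \<circ> v) \<circ> u = u \<circ> (u \<circ> u \<circ> u \<circ> v)"
    unfolding u_def v_def gv using dist
    by (intro fun_eq_on_list[where xs = "[a, b, c, d, e, f]"])
      (simp_all add: cycle_of_list_three_apply eq_commute)
  ultimately have "perfect_commutator_pair (alt_group n) g
      (cycle_of_list [a, b, e]) (cycle_of_list [a, e, b])"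
    using g dist points
    by (intro perfect_commutator_pair_three_cyclesI[OF u_def v_def,
          where h = v and k = "v \<circ> v \<circ> v \<circ> u"
            and h' = u and k' = "u \<circ> u \<circ> u \<circ> v"]
          generate_alt_group_comp generate.incl insertI1 insertI2) auto
  then show ?thesis
    by blast
qed

lemma perfect_commutator_pair_three_cycle_and_moved_point:
  assumes g: "g \<in> carrier (alt_group n)" and dist: "distinct [a, b, c, d, e]"
    and points: "{a, b, c, d, e} \<subseteq> {1..n}"
    and gv: "g a = b" "g b = c" "g c = a" "g d = e"
  shows "\<exists>x y. perfect_commutator_pair (alt_group n) g x y"
proof -
  define u where "u = cycle_of_list [g a, g b, g d] \<circ> cycle_of_list [a, d, b]"
  define v where "v = cycle_of_list [g a, g d, g b] \<circ> cycle_of_list [a, b, d]"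
  have "u a \<noteq> a"
    unfolding u_def gv using dist by (simp add: cycle_of_list_three_apply eq_commute)
  moreover have "u \<circ> (v \<circ> v \<circ> v \<circ> u) \<circ> v = v \<circ> (v \<circ> v \<circ> v \<circ> u)"
    unfolding u_def v_def gv using dist
    by (intro fun_eq_on_list[where xs = "[a, b, c, d, e]"])
      (simp_all add: cycle_of_list_three_apply eq_commute)
  moreover have "v \<circ> (u \<circ> u \<circ> u \<circ> v) \<circ> u = u \<circ> (u \<circ> u \<circ> u \<circ> v)"
    unfolding u_def v_def gv using dist
    by (intro fun_eq_on_list[where xs = "[a, b, c, d, e]"])
      (simp_all add: cycle_of_list_three_apply eq_commute)
  ultimately have "perfect_commutator_pair (alt_group n) g
      (cycle_of_list [a, b, d]) (cycle_of_list [a, d, b])"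
    using g dist points
    by (intro perfect_commutator_pair_three_cyclesI[OF u_def v_def,
          where h = v and k = "v \<circ> v \<circ> v \<circ> u"
            and h' = u and k' = "u \<circ> u \<circ> u \<circ> v"]
          generate_alt_group_comp generate.incl insertI1 insertI2) auto
  then show ?thesis
    by blast
qed

lemma perfect_commutator_pair_three_cycle_and_fixed_points:
  assumes g: "g \<in> carrier (alt_group n)" and dist: "distinct [a, b, c, d, e]"
    and points: "{a, b, c, d, e} \<subseteq> {1..n}"
    and gv: "g a = b" "g b = c" "g c = a" "g d = d" "g e = e"
  shows "\<exists>x y. perfect_commutator_pair (alt_group n) g x y"
proof -
  define u where "u = cycle_of_list [g a, g d, g e] \<circ> cycle_of_list [a, e, d]"
  define v where "v = cycle_of_list [g b, g e, g d] \<circ> cycle_of_list [b, d, e]"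
  have "u a \<noteq> a"
    unfolding u_def gv using dist by (simp add: cycle_of_list_three_apply eq_commute)
  moreover have "u \<circ> (v \<circ> u \<circ> v) \<circ> (v \<circ> u \<circ> u \<circ> v) = v \<circ> u \<circ> u \<circ> v \<circ> (v \<circ> u \<circ> v)"
    unfolding u_def v_def gv using dist
    by (intro fun_eq_on_list[where xs = "[a, b, c, d, e]"])
      (simp_all add: cycle_of_list_three_apply eq_commute)
  moreover have "v \<circ> (u \<circ> v \<circ> u) \<circ> (u \<circ> v \<circ> u \<circ> u) = u \<circ> v \<circ> u \<circ> u \<circ> (u \<circ> v \<circ> u)"
    unfolding u_def v_def gv using dist
    by (intro fun_eq_on_list[where xs = "[a, b, c, d, e]"])
      (simp_all add: cycle_of_list_three_apply eq_commute)
  ultimately have "perfect_commutator_pair (alt_group n) g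
      (cycle_of_list [a, d, e]) (cycle_of_list [b, e, d])"
    using g dist points
    by (intro perfect_commutator_pair_three_cyclesI[OF u_def v_def,
          where h = "v \<circ> u \<circ> u \<circ> v" and k = "v \<circ> u \<circ> v"
            and h' = "u \<circ> v \<circ> u \<circ> u" and k' = "u \<circ> v \<circ> u"]
          generate_alt_group_comp generate.incl insertI1 insertI2) auto
  then show ?thesis
    by blast
qed

lemma perfect_commutator_pair_two_transpositions_and_fixed_point:
  assumes g: "g \<in> carrier (alt_group n)" and dist: "distinct [a, b, c, d, e]"
    and points: "{a, b, c, d, e} \<subseteq> {1..n}"
    and gv: "g a = b" "g b = a" "g c = d" "g d = c" "g e = e"
  shows "\<exists>x y. perfect_commutator_pair (alt_group n) g x y"
proof -
  define u where "u = cycle_of_list [g a, g c, g e] \<circ> cycle_of_list [a, e, c]"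
  define v where "v = cycle_of_list [g b, g e, g d] \<circ> cycle_of_list [b, d, e]"
  have "u a \<noteq> a"
    unfolding u_def gv using dist by (simp add: cycle_of_list_three_apply eq_commute)
  moreover have "u \<circ> v \<circ> (v \<circ> u) = v \<circ> u \<circ> v"
    unfolding u_def v_def gv using dist
    by (intro fun_eq_on_list[where xs = "[a, b, c, d, e]"])
      (simp_all add: cycle_of_list_three_apply eq_commute)
  moreover have "v \<circ> u \<circ> (u \<circ> v) = u \<circ> v \<circ> u"
    unfolding u_def v_def gv using dist
    by (intro fun_eq_on_list[where xs = "[a, b, c, d, e]"])
      (simp_all add: cycle_of_list_three_apply eq_commute)
  ultimately have "perfect_commutator_pair (alt_group n) g
      (cycle_of_list [a, c, e]) (cycle_of_list [b, e, d])"
    using g dist points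
    by (intro perfect_commutator_pair_three_cyclesI[OF u_def v_def,
          where h = "v \<circ> u" and k = v
            and h' = "u \<circ> v" and k' = u]
          generate_alt_group_comp generate.incl insertI1 insertI2) auto
  then show ?thesis
    by blast
qed

lemma perfect_commutator_pair_four_transpositions:
  assumes g: "g \<in> carrier (alt_group n)" and dist: "distinct [a, b, c, d, e, f, p, q]"
    and points: "{a, b, c, d, e, f, p, q} \<subseteq> {1..n}"
    and gv: "g a = b" "g b = a" "g c = d" "g d = c" "g e = f" "g f = e" "g p = q" "g q = p"
  shows "\<exists>x y. perfect_commutator_pair (alt_group n) g x y"
proof -
  define u where "u = cycle_of_list [g a, g c, g e] \<circ> cycle_of_list [a, e, c]"
  define v where "v = cycle_of_list [g a, g d, g p] \<circ> cycle_of_list [a, p, d]"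
  have "u a \<noteq> a"
    unfolding u_def gv using dist by (simp add: cycle_of_list_three_apply eq_commute)
  moreover have "u \<circ> (v \<circ> u \<circ> v \<circ> u \<circ> u) \<circ> (v \<circ> u \<circ> v) = v \<circ> u \<circ> v \<circ> (v \<circ> u \<circ> v \<circ> u \<circ> u)"
    unfolding u_def v_def gv using dist
    by (intro fun_eq_on_list[where xs = "[a, b, c, d, e, f, p, q]"])
      (simp_all add: cycle_of_list_three_apply eq_commute)
  moreover have "v \<circ> (u \<circ> v \<circ> u \<circ> v \<circ> v) \<circ> (u \<circ> v \<circ> u) = u \<circ> v \<circ> u \<circ> (u \<circ> v \<circ> u \<circ> v \<circ> v)"
    unfolding u_def v_def gv using dist
    by (intro fun_eq_on_list[where xs = "[a, b, c, d, e, f, p, q]"])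
      (simp_all add: cycle_of_list_three_apply eq_commute)
  ultimately have "perfect_commutator_pair (alt_group n) g
      (cycle_of_list [a, c, e]) (cycle_of_list [a, d, p])"
    using g dist points
    by (intro perfect_commutator_pair_three_cyclesI[OF u_def v_def,
          where h = "v \<circ> u \<circ> v" and k = "v \<circ> u \<circ> v \<circ> u \<circ> u"
            and h' = "u \<circ> v \<circ> u" and k' = "u \<circ> v \<circ> u \<circ> v \<circ> v"]
          generate_alt_group_comp generate.incl insertI1 insertI2) auto
  then show ?thesis
    by blast
qed

section \<open>The case distinction on the cycle type\<close>

lemma alt_group_inj:
  assumes "g \<in> carrier (alt_group n)"
  shows "g x = g y \<longleftrightarrow> x = y"
  using assms permutes_inj by (fastforce simp: alt_group_carrier inj_eq)

lemma alt_group_moved_point: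
  assumes "g \<in> carrier (alt_group n)" and "g a \<noteq> a"
  shows "a \<in> {1..n}"
  using assms permutes_not_in by (fastforce simp: alt_group_carrier)

lemma alt_group_apply_closed:
  assumes "g \<in> carrier (alt_group n)" and "a \<in> {1..n}"
  shows "g a \<in> {1..n}"
  using assms permutes_in_image by (fastforce simp: alt_group_carrier)

lemma alt_group_moves_point_outside:
  assumes "g \<in> carrier (alt_group n)" and "\<not> evenperm h"
    and "\<forall>x\<in>T. g x = h x" and "\<forall>x. x \<notin> T \<longrightarrow> h x = x"
  shows "\<exists>e. e \<notin> T \<and> g e \<noteq> e"
proof (rule ccontr)
  assume "\<nexists>e. e \<notin> T \<and> g e \<noteq> e"
  then have "g = h"
    using assms(3,4) by (metis ext)
  then show False
    using assms(1,2) by (simp add: alt_group_carrier)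
qed

lemma odd_three_transpositions:
  assumes "a \<noteq> b" "c \<noteq> d" "e \<noteq> f"
  shows "\<not> evenperm (transpose a b \<circ> transpose c d \<circ> transpose e f)"
  using assms by (simp add: evenperm_comp permutation_compose permutation_swap_id evenperm_swap)

lemma fresh_point:
  assumes "length xs < n"
  obtains e where "e \<in> {1..n}" "e \<notin> set xs"
proof -
  have "card (set xs) < card {1..n}"
    using card_length[of xs] assms by simp
  then have "\<not> {1..n} \<subseteq> set xs"
    by (meson card_mono finite_set leD)
  then show thesis
    using that by blast
qed

lemma perfect_commutator_pair_if_four_orbit_points:
  assumes g: "g \<in> carrier (alt_group n)" and dist: "distinct [a, g a, g (g a), g (g (g a))]"
  shows "\<exists>x y. perfect_commutator_pair (alt_group n) g x y"
proof -
  obtain b c d where gv: "g a = b" "g b = c" "g c = d"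
    by blast
  have inj: "\<And>x y. g x = g y \<longleftrightarrow> x = y"
    using g by (rule alt_group_inj)
  have abcd: "distinct [a, b, c, d]"
    using dist by (simp add: gv)
  have "a \<in> {1..n}"
    using alt_group_moved_point[OF g] abcd gv by auto
  then have points: "{a, b, c, d} \<subseteq> {1..n}"
    using alt_group_apply_closed[OF g] gv by force
  show ?thesis
  proof (cases "g d = a")
    case True
    \<comment> \<open>The 4-cycle (a b c d) is odd, so the even permutation g moves a further point.\<close>
    have "\<forall>x\<in>{a, b, c, d}. g x = (transpose a b \<circ> transpose b c \<circ> transpose c d) x"
      using abcd True gv by (auto simp: transpose_def)
    moreover have "\<forall>x. x \<notin> {a, b, c, d} \<longrightarrow> (transpose a b \<circ> transpose b c \<circ> transpose c d) x = x"
      by (simp add: transpose_def)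
    moreover have "\<not> evenperm (transpose a b \<circ> transpose b c \<circ> transpose c d)"
      using abcd by (intro odd_three_transpositions) auto
    ultimately obtain e where e: "e \<notin> {a, b, c, d}" "g e \<noteq> e"
      using alt_group_moves_point_outside[OF g] by blast
    have "g e \<noteq> g a" "g e \<noteq> g b" "g e \<noteq> g c" "g e \<noteq> g d"
      using e(1) inj by auto
    then have "distinct [a, b, c, d, e, g e]"
      using abcd e True gv by auto
    moreover have "{a, b, c, d, e, g e} \<subseteq> {1..n}"
      using points e(2) alt_group_moved_point[OF g] alt_group_apply_closed[OF g] by blast
    ultimately show ?thesis
      by (rule perfect_commutator_pair_four_cycle[OF g _ _ gv True refl])
  next
    case False
    have "g d \<noteq> g a" "g d \<noteq> g b" "g d \<noteq> g c"
      using abcd inj by auto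
    then have "distinct [a, b, c, d, g d]"
      using abcd False gv by auto
    moreover have "{a, b, c, d, g d} \<subseteq> {1..n}"
      using points alt_group_apply_closed[OF g] by blast
    ultimately show ?thesis
      by (rule perfect_commutator_pair_long_cycle[OF g _ _ gv refl])
  qed
qed

lemma perfect_commutator_pair_if_three_cycle:
  assumes n: "5 \<le> n" and g: "g \<in> carrier (alt_group n)"
    and dist: "distinct [a, g a, g (g a)]" and "g (g (g a)) = a"
  shows "\<exists>x y. perfect_commutator_pair (alt_group n) g x y"
proof -
  obtain b c where gv: "g a = b" "g b = c" "g c = a"
    using assms(4) by blast
  have abc: "distinct [a, b, c]"
    using dist by (simp add: gv)
  have "a \<in> {1..n}"
    using alt_group_moved_point[OF g] abc gv by auto
  then have points: "{a, b, c} \<subseteq> {1..n}"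
    using alt_group_apply_closed[OF g] gv by force
  show ?thesis
  proof (cases "\<exists>d. d \<notin> {a, b, c} \<and> g d \<noteq> d")
    case True
    then obtain d where d: "d \<notin> {a, b, c}" "g d \<noteq> d"
      by blast
    have "g d \<noteq> g a" "g d \<noteq> g b" "g d \<noteq> g c"
      using d(1) alt_group_inj[OF g] by auto
    then have "distinct [a, b, c, d, g d]"
      using abc d gv by auto
    moreover have "{a, b, c, d, g d} \<subseteq> {1..n}"
      using points d(2) alt_group_moved_point[OF g] alt_group_apply_closed[OF g] by blast
    ultimately show ?thesis
      by (rule perfect_commutator_pair_three_cycle_and_moved_point[OF g _ _ gv refl])
  next
    case False
    obtain d where d: "d \<in> {1..n}" "d \<notin> set [a, b, c]"
      using fresh_point[of "[a, b, c]" n] n by auto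
    obtain e where e: "e \<in> {1..n}" "e \<notin> set [a, b, c, d]"
      using fresh_point[of "[a, b, c, d]" n] n by auto
    have "distinct [a, b, c, d, e]"
      using abc d e by auto
    moreover have "{a, b, c, d, e} \<subseteq> {1..n}"
      using points d e by blast
    moreover have "g d = d" "g e = e"
      using False d e by auto
    ultimately show ?thesis
      using perfect_commutator_pair_three_cycle_and_fixed_points[OF g _ _ gv] by blast
  qed
qed

lemma perfect_commutator_pair_if_two_transpositions:
  assumes n: "5 \<le> n" and g: "g \<in> carrier (alt_group n)" and inv: "\<And>x. g (g x) = x"
    and dist: "distinct [a, b, c, d]" and points: "{a, b, c, d} \<subseteq> {1..n}"
    and gv: "g a = b" "g b = a" "g c = d" "g d = c"
  shows "\<exists>x y. perfect_commutator_pair (alt_group n) g x y"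
proof (cases "\<exists>e\<in>{1..n}. e \<notin> {a, b, c, d} \<and> g e = e")
  case True
  then obtain e where e: "e \<in> {1..n}" "e \<notin> {a, b, c, d}" "g e = e"
    by blast
  have "distinct [a, b, c, d, e]"
    using dist e(2) by auto
  moreover have "{a, b, c, d, e} \<subseteq> {1..n}"
    using points e(1) by blast
  ultimately show ?thesis
    by (rule perfect_commutator_pair_two_transpositions_and_fixed_point[OF g _ _ gv e(3)])
next
  case False
  obtain e where e: "e \<in> {1..n}" "e \<notin> set [a, b, c, d]"
    using fresh_point[of "[a, b, c, d]" n] n by auto
  define f where "f = g e"
  have "g e \<noteq> g a" "g e \<noteq> g b" "g e \<noteq> g c" "g e \<noteq> g d" "g e \<noteq> e"
    using e False alt_group_inj[OF g] by auto
  then have abcdef: "distinct [a, b, c, d, e, f]"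
    using dist e gv by (auto simp: f_def)
  have gf: "g f = e"
    using inv by (simp add: f_def)
  have "\<forall>x\<in>{a, b, c, d, e, f}. g x = (transpose a b \<circ> transpose c d \<circ> transpose e f) x"
    using abcdef gv gf by (auto simp: f_def transpose_def)
  moreover have "\<forall>x. x \<notin> {a, b, c, d, e, f} \<longrightarrow> (transpose a b \<circ> transpose c d \<circ> transpose e f) x = x"
    by (simp add: transpose_def)
  moreover have "\<not> evenperm (transpose a b \<circ> transpose c d \<circ> transpose e f)"
    using abcdef by (intro odd_three_transpositions) auto
  ultimately obtain p where p: "p \<notin> {a, b, c, d, e, f}" "g p \<noteq> p"
    using alt_group_moves_point_outside[OF g] by blast
  have "g p \<noteq> g a" "g p \<noteq> g b" "g p \<noteq> g c" "g p \<noteq> g d" "g p \<noteq> g e" "g p \<noteq> g f"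
    using p(1) alt_group_inj[OF g] by auto
  then have "distinct [a, b, c, d, e, f, p, g p]"
    using abcdef p gv gf by (auto simp: f_def)
  moreover have "{a, b, c, d, e, f, p, g p} \<subseteq> {1..n}"
    using points e p(2) alt_group_moved_point[OF g] alt_group_apply_closed[OF g] by (auto simp: f_def)
  ultimately show ?thesis
    using perfect_commutator_pair_four_transpositions[OF g _ _ gv f_def[symmetric] gf refl] inv by blast
qed

lemma perfect_commutator_pair_if_involution:
  assumes n: "5 \<le> n" and g: "g \<in> carrier (alt_group n)" and "g \<noteq> id"
    and inv: "\<And>x. g (g x) = x"
  shows "\<exists>x y. perfect_commutator_pair (alt_group n) g x y"
proof -
  obtain a where a: "g a \<noteq> a"
    using \<open>g \<noteq> id\<close> by (auto simp: fun_eq_iff)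
  define b where "b = g a"
  have gb: "g b = a"
    using inv by (simp add: b_def)
  have "\<forall>x\<in>{a, b}. g x = transpose a b x"
    using gb by (auto simp: b_def)
  moreover have "\<forall>x. x \<notin> {a, b} \<longrightarrow> transpose a b x = x"
    by simp
  moreover have "\<not> evenperm (transpose a b)"
    using a by (simp add: b_def evenperm_swap)
  ultimately obtain c where c: "c \<notin> {a, b}" "g c \<noteq> c"
    using alt_group_moves_point_outside[OF g] by blast
  define d where "d = g c"
  have "g c \<noteq> g a" "g c \<noteq> g b"
    using c(1) alt_group_inj[OF g] by auto
  then have "distinct [a, b, c, d]"
    using a c gb by (auto simp: b_def d_def)
  moreover have "{a, b, c, d} \<subseteq> {1..n}"
    using a c(2) alt_group_moved_point[OF g] alt_group_apply_closed[OF g] by (auto simp: b_def d_def)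
  ultimately show ?thesis
    using perfect_commutator_pair_if_two_transpositions[OF n g inv] b_def gb d_def inv by auto
qed

theorem alt_group_perfect_commutator_pair:
  assumes n: "5 \<le> n" and g: "g \<in> carrier (alt_group n)" and "g \<noteq> id"
  shows "\<exists>x y. perfect_commutator_pair (alt_group n) g x y"
proof (cases "\<exists>a. distinct [a, g a, g (g a), g (g (g a))]")
  case True
  then show ?thesis
    using perfect_commutator_pair_if_four_orbit_points[OF g] by blast
next
  case no_four: False
  have inj: "\<And>x y. g x = g y \<longleftrightarrow> x = y"
    using g by (rule alt_group_inj)
  show ?thesis
  proof (cases "\<exists>a. distinct [a, g a, g (g a)]")
    case True
    then obtain a where a: "distinct [a, g a, g (g a)]"
      by blast
    then have "g (g (g a)) \<noteq> g a" "g (g (g a)) \<noteq> g (g a)"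
      using inj by auto
    then have "g (g (g a)) = a"
      using no_four a by auto
    then show ?thesis
      using perfect_commutator_pair_if_three_cycle[OF n g a] by blast
  next
    case no_three: False
    have "g (g x) = x" for x
    proof (cases "g x = x")
      case False
      moreover have "g (g x) \<noteq> g x"
        using False inj by simp
      moreover have "\<not> distinct [x, g x, g (g x)]"
        using no_three by blast
      ultimately show ?thesis
        by auto
    qed simp
    then show ?thesis
      using perfect_commutator_pair_if_involution[OF n g \<open>g \<noteq> id\<close>] by blast
  qed
qed

theorem proposition3p1:
  fixes n :: nat
  assumes "n \<ge> 5"
  shows "radical_degree (alt_group n) = 2"
proof -
  interpret A: group "alt_group n"
    by (rule alt_group_is_group)
  have "cycle_of_list [1, 2, 3] \<in> carrier (alt_group n)"
    using assms by (intro cycle_of_list_three_in_alt_group) auto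
  moreover have "cycle_of_list [1, 2, 3] 1 \<noteq> (1 :: nat)"
    by (simp add: cycle_of_list_three_apply)
  ultimately have "carrier (alt_group n) \<noteq> {\<one>\<^bsub>alt_group n\<^esub>}"
    by (auto simp: alt_group_one)
  then show ?thesis
    using assms alt_group_perfect_commutator_pair by (intro A.radical_degree_eq_two) (auto simp: alt_group_one)
qed

end
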